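(* Let $K$ be a field with $\operatorname{char}(K)\neq2$ and let $(M,N,(\cdot_1,\cdot_2),\partial,(\{-,-\},\langle-,-\rangle))$ be a braided crossed module of Leibniz $K$-algebras such that $\{n,n'\}=-\langle n',n\rangle$ for all $n,n'\in N$. Then $m\cdot_2n=-n\cdot_1m$ for all $m\in M$, $n\in N$, and $(M,N,\cdot_1,\partial,\{-,-\})$ is a braided crossed module of Lie $K$-algebras (in particular $M$ and $N$ are Lie $K$-algebras).
   Context: A Leibniz $K$-algebra: bilinear bracket with $[x,[y,z]]=[[x,y],z]-[[x,z],y]$. Leibniz action of $N$ on $M$: bilinear $\cdot_1\colon N\times M\to M$, $\cdot_2\colon M\times N\to M$ with $n\cdot_1[m,m']=[n\cdot_1m,m']-[n\cdot_1m',m]$; $[m,n\cdot_1m']=[m\cdot_2n,m']-[m,m']\cdot_2n$; $[m,m'\cdot_2n]=[m,m']\cdot_2n-[m\cdot_2n,m']$; $m\cdot_2[n,n']=(m\cdot_2n)\cdot_2n'-(m\cdot_2n')\cdot_2n$; $n\cdot_1(m\cdot_2n')=(n\cdot_1m)\cdot_2n'-[n,n']\cdot_1m$; $n\cdot_1(n'\cdot_1m)=[n,n']\cdot_1m-(n\cdot_1m)\cdot_2n'$. Crossed module of Leibniz algebras: such an action with a Leibniz homomorphism $\partial\colon M\to N$, $\partial(n\cdot_1m)=[n,\partial m]$, $\partial(m\cdot_2n)=[\partial m,n]$, $\partial(m)\cdot_1m'=[m,m']=m\cdot_2\partial(m')$. Braiding: bilinear $\{-,-\},\langle-,-\rangle\colon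 N\times N\to M$ with $\partial\{n,n'\}=[n,n']=\partial\langle n,n'\rangle$; $\{\partial m,\partial m'\}=[m,m']=\langle\partial m,\partial m'\rangle$; $\{\partial m,n\}=m\cdot_2n=\langle\partial m,n\rangle$; $\{n,\partial m\}=n\cdot_1m=\langle n,\partial m\rangle$; $\{n,[n',n'']\}=\{[n,n'],n''\}-\{[n,n''],n'\}$; $\langle n,[n',n'']\rangle=\{[n,n'],n''\}-\langle[n,n''],n'\rangle$; $\{n,[n',n'']\}=\{[n,n'],n''\}-\langle[n,n''],n'\rangle$; $\langle n,[n',n'']\rangle=\langle[n,n'],n''\rangle-\langle[n,n''],n'\rangle$. A Lie action of a Lie algebra $N$ on a Lie algebra $M$ is a bilinear $\cdot\colon N\times M\to M$ with $[n,n']\cdot m=n\cdot(n'\cdot m)-n'\cdot(n\cdot m)$ and $n\cdot[m,m']=[n\cdot m,m']+[m,n\cdot m']$. A crossed module of Lie algebras $(M,N,\cdot,\partial)$: Lie action and Lie homomorphism $\partial$ with $\partial(n\cdot m)=[n,\partial m]$ and $\partial(m)\cdot m'=[m,m']$. A braiding on it is a bilinear $\{-,-\}\colon N\times N\to M$ with $\partial\{n,n'\}=[n,n']$; $\{\partial m,\partial m'\}=[m,m']$; $\{\partial m,n\}=-n\cdot m$; $\{n,\partial m\}=n\cdot m$; $\{n,[n',n'']\}=\{[n,n'],n''\}-\{[n,n''],n'\}$; $\{[n,n'],n''\}=\{n,[n',n'']\}-\{n',[n,n'']\}$. *)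

theory Defs
  imports Main "HOL.Vector_Spaces"
begin

definition bilinear_map ::
  "('k::field \<Rightarrow> 'a::ab_group_add \<Rightarrow> 'a) \<Rightarrow> ('k \<Rightarrow> 'b::ab_group_add \<Rightarrow> 'b) \<Rightarrow>
   ('k \<Rightarrow> 'c::ab_group_add \<Rightarrow> 'c) \<Rightarrow> ('a \<Rightarrow> 'b \<Rightarrow> 'c) \<Rightarrow> bool" where
  "bilinear_map sA sB sC f \<longleftrightarrow>
     (\<forall>x. Vector_Spaces.linear sB sC (f x)) \<and> (\<forall>y. Vector_Spaces.linear sA sC (\<lambda>x. f x y))"

definition leibniz_algebra :: "('k::field \<Rightarrow> 'a::ab_group_add \<Rightarrow> 'a) \<Rightarrow> ('a \<Rightarrow> 'a \<Rightarrow> 'a) \<Rightarrow> bool" where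
  "leibniz_algebra s br \<longleftrightarrow> vector_space s \<and> bilinear_map s s s br \<and>
     (\<forall>x y z. br x (br y z) = br (br x y) z - br (br x z) y)"

definition lie_algebra :: "('k::field \<Rightarrow> 'a::ab_group_add \<Rightarrow> 'a) \<Rightarrow> ('a \<Rightarrow> 'a \<Rightarrow> 'a) \<Rightarrow> bool" where
  "lie_algebra s br \<longleftrightarrow> vector_space s \<and> bilinear_map s s s br \<and>
     (\<forall>x. br x x = 0) \<and>
     (\<forall>x y z. br x (br y z) + br y (br z x) + br z (br x y) = 0)"

definition leibniz_hom ::
  "('k::field \<Rightarrow> 'a::ab_group_add \<Rightarrow> 'a) \<Rightarrow> ('a \<Rightarrow> 'a \<Rightarrow> 'a) \<Rightarrow>
   ('k \<Rightarrow> 'b::ab_group_add \<Rightarrow> 'b) \<Rightarrow> ('b \<Rightarrow> 'b \<Rightarrow> 'b) \<Rightarrow> ('a \<Rightarrow> 'b) \<Rightarrow> bool" where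
  "leibniz_hom sA brA sB brB f \<longleftrightarrow> Vector_Spaces.linear sA sB f \<and>
     (\<forall>x y. f (brA x y) = brB (f x) (f y))"

text \<open>Leibniz action of N on M: act1 = \<open>\<cdot>\<^sub>1\<close> : N \<times> M \<rightarrow> M, act2 = \<open>\<cdot>\<^sub>2\<close> : M \<times> N \<rightarrow> M.\<close>
definition leibniz_action ::
  "('k::field \<Rightarrow> 'm::ab_group_add \<Rightarrow> 'm) \<Rightarrow> ('m \<Rightarrow> 'm \<Rightarrow> 'm) \<Rightarrow>
   ('k \<Rightarrow> 'n::ab_group_add \<Rightarrow> 'n) \<Rightarrow> ('n \<Rightarrow> 'n \<Rightarrow> 'n) \<Rightarrow>
   ('n \<Rightarrow> 'm \<Rightarrow> 'm) \<Rightarrow> ('m \<Rightarrow> 'n \<Rightarrow> 'm) \<Rightarrow> bool" where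
  "leibniz_action sM brM sN brN act1 act2 \<longleftrightarrow>
     bilinear_map sN sM sM act1 \<and> bilinear_map sM sN sM act2 \<and>
     (\<forall>n m m'. act1 n (brM m m') = brM (act1 n m) m' - brM (act1 n m') m) \<and>
     (\<forall>m n m'. brM m (act1 n m') = brM (act2 m n) m' - act2 (brM m m') n) \<and>
     (\<forall>m m' n. brM m (act2 m' n) = act2 (brM m m') n - brM (act2 m n) m') \<and>
     (\<forall>m n n'. act2 m (brN n n') = act2 (act2 m n) n' - act2 (act2 m n') n) \<and>
     (\<forall>n m n'. act1 n (act2 m n') = act2 (act1 n m) n' - act1 (brN n n') m) \<and>
     (\<forall>n n' m. act1 n (act1 n' m) = act1 (brN n n') m - act2 (act1 n m) n')"

definition leibniz_crossed_module ::
  "('k::field \<Rightarrow> 'm::ab_group_add \<Rightarrow> 'm) \<Rightarrow> ('m \<Rightarrow> 'm \<Rightarrow> 'm) \<Rightarrow>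
   ('k \<Rightarrow> 'n::ab_group_add \<Rightarrow> 'n) \<Rightarrow> ('n \<Rightarrow> 'n \<Rightarrow> 'n) \<Rightarrow>
   ('n \<Rightarrow> 'm \<Rightarrow> 'm) \<Rightarrow> ('m \<Rightarrow> 'n \<Rightarrow> 'm) \<Rightarrow> ('m \<Rightarrow> 'n) \<Rightarrow> bool" where
  "leibniz_crossed_module sM brM sN brN act1 act2 d \<longleftrightarrow>
     leibniz_algebra sM brM \<and> leibniz_algebra sN brN \<and>
     leibniz_action sM brM sN brN act1 act2 \<and>
     leibniz_hom sM brM sN brN d \<and>
     (\<forall>n m. d (act1 n m) = brN n (d m)) \<and>
     (\<forall>m n. d (act2 m n) = brN (d m) n) \<and>
     (\<forall>m m'. act1 (d m) m' = brM m m') \<and>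
     (\<forall>m m'. brM m m' = act2 m (d m'))"

text \<open>A braiding: br1 = \<open>{-,-}\<close>, br2 = \<open>\<langle>-,-\<rangle>\<close>.\<close>
definition leibniz_braiding ::
  "('k::field \<Rightarrow> 'm::ab_group_add \<Rightarrow> 'm) \<Rightarrow> ('m \<Rightarrow> 'm \<Rightarrow> 'm) \<Rightarrow>
   ('k \<Rightarrow> 'n::ab_group_add \<Rightarrow> 'n) \<Rightarrow> ('n \<Rightarrow> 'n \<Rightarrow> 'n) \<Rightarrow>
   ('n \<Rightarrow> 'm \<Rightarrow> 'm) \<Rightarrow> ('m \<Rightarrow> 'n \<Rightarrow> 'm) \<Rightarrow> ('m \<Rightarrow> 'n) \<Rightarrow>
   ('n \<Rightarrow> 'n \<Rightarrow> 'm) \<Rightarrow> ('n \<Rightarrow> 'n \<Rightarrow> 'm) \<Rightarrow> bool" where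
  "leibniz_braiding sM brM sN brN act1 act2 d br1 br2 \<longleftrightarrow>
     bilinear_map sN sN sM br1 \<and> bilinear_map sN sN sM br2 \<and>
     (\<forall>n n'. d (br1 n n') = brN n n' \<and> d (br2 n n') = brN n n') \<and>
     (\<forall>m m'. br1 (d m) (d m') = brM m m' \<and> br2 (d m) (d m') = brM m m') \<and>
     (\<forall>m n. br1 (d m) n = act2 m n \<and> br2 (d m) n = act2 m n) \<and>
     (\<forall>n m. br1 n (d m) = act1 n m \<and> br2 n (d m) = act1 n m) \<and>
     (\<forall>n n' n''. br1 n (brN n' n'') = br1 (brN n n') n'' - br1 (brN n n'') n') \<and>
     (\<forall>n n' n''. br2 n (brN n' n'') = br1 (brN n n') n'' - br2 (brN n n'') n') \<and>
     (\<forall>n n' n''. br1 n (brN n' n'') = br1 (brN n n') n'' - br2 (brN n n'') n') \<and>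
     (\<forall>n n' n''. br2 n (brN n' n'') = br2 (brN n n') n'' - br2 (brN n n'') n')"

definition lie_action ::
  "('k::field \<Rightarrow> 'm::ab_group_add \<Rightarrow> 'm) \<Rightarrow> ('m \<Rightarrow> 'm \<Rightarrow> 'm) \<Rightarrow>
   ('k \<Rightarrow> 'n::ab_group_add \<Rightarrow> 'n) \<Rightarrow> ('n \<Rightarrow> 'n \<Rightarrow> 'n) \<Rightarrow> ('n \<Rightarrow> 'm \<Rightarrow> 'm) \<Rightarrow> bool" where
  "lie_action sM brM sN brN act \<longleftrightarrow>
     bilinear_map sN sM sM act \<and>
     (\<forall>n n' m. act (brN n n') m = act n (act n' m) - act n' (act n m)) \<and>
     (\<forall>n m m'. act n (brM m m') = brM (act n m) m' + brM m (act n m'))"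

definition lie_crossed_module ::
  "('k::field \<Rightarrow> 'm::ab_group_add \<Rightarrow> 'm) \<Rightarrow> ('m \<Rightarrow> 'm \<Rightarrow> 'm) \<Rightarrow>
   ('k \<Rightarrow> 'n::ab_group_add \<Rightarrow> 'n) \<Rightarrow> ('n \<Rightarrow> 'n \<Rightarrow> 'n) \<Rightarrow>
   ('n \<Rightarrow> 'm \<Rightarrow> 'm) \<Rightarrow> ('m \<Rightarrow> 'n) \<Rightarrow> bool" where
  "lie_crossed_module sM brM sN brN act d \<longleftrightarrow>
     lie_algebra sM brM \<and> lie_algebra sN brN \<and>
     lie_action sM brM sN brN act \<and>
     leibniz_hom sM brM sN brN d \<and>
     (\<forall>n m. d (act n m) = brN n (d m)) \<and>
     (\<forall>m m'. act (d m) m' = brM m m')"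

definition lie_braiding ::
  "('k::field \<Rightarrow> 'm::ab_group_add \<Rightarrow> 'm) \<Rightarrow> ('m \<Rightarrow> 'm \<Rightarrow> 'm) \<Rightarrow>
   ('k \<Rightarrow> 'n::ab_group_add \<Rightarrow> 'n) \<Rightarrow> ('n \<Rightarrow> 'n \<Rightarrow> 'n) \<Rightarrow>
   ('n \<Rightarrow> 'm \<Rightarrow> 'm) \<Rightarrow> ('m \<Rightarrow> 'n) \<Rightarrow> ('n \<Rightarrow> 'n \<Rightarrow> 'm) \<Rightarrow> bool" where
  "lie_braiding sM brM sN brN act d br \<longleftrightarrow>
     bilinear_map sN sN sM br \<and>
     (\<forall>n n'. d (br n n') = brN n n') \<and>
     (\<forall>m m'. br (d m) (d m') = brM m m') \<and>
     (\<forall>m n. br (d m) n = - act n m) \<and>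
     (\<forall>n m. br n (d m) = act n m) \<and>
     (\<forall>n n' n''. br n (brN n' n'') = br (brN n n') n'' - br (brN n n'') n') \<and>
     (\<forall>n n' n''. br (brN n n') n'' = br n (brN n' n'') - br n' (brN n n''))"

end

theory Submission
  imports Defs
begin

text \<open>Through the braiding axioms, the symmetry \<open>{n,n'} = -\<langle>n',n\<rangle>\<close> turns into
antisymmetry of both brackets (using \<open>{\<partial>m,\<partial>m'} = [m,m']\<close> and \<open>\<partial>{n,n'} = [n,n']\<close>) and into
\<open>m \<cdot>\<^sub>2 n = -n \<cdot>\<^sub>1 m\<close> (using \<open>{\<partial>m,n} = m \<cdot>\<^sub>2 n\<close> and \<open>\<langle>n,\<partial>m\<rangle> = n \<cdot>\<^sub>1 m\<close>). An antisymmetric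
Leibniz algebra is a Lie algebra once \<open>2 \<noteq> 0\<close>: the Leibniz identity rewrites to the Jacobi
identity, and \<open>[x,x] = -[x,x]\<close> forces \<open>[x,x] = 0\<close>. With \<open>\<cdot>\<^sub>2\<close> expressed through \<open>\<cdot>\<^sub>1\<close>, the
Leibniz action and braiding axioms likewise reduce to their Lie counterparts.\<close>

lemma vector_space_add_self_eq_zero_imp_zero:
  fixes s :: "'k::field \<Rightarrow> 'a::ab_group_add \<Rightarrow> 'a" and x :: 'a
  assumes "vector_space s" and "(2::'k) \<noteq> 0" and "x + x = 0"
  shows "x = 0"
proof -
  interpret vector_space s by fact
  have "s 2 x = x + x"
    using scale_left_distrib[of 1 1 x] by (simp add: one_add_one)
  with assms show ?thesis by simp
qed

lemma bilinear_map_minus_right: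
  assumes "bilinear_map sA sB sC f"
  shows "f x (- y) = - f x y"
  using assms module_hom.neg module_hom_iff_linear unfolding bilinear_map_def by metis

lemma antisymmetric_leibniz_algebra_is_lie_algebra:
  fixes s :: "'k::field \<Rightarrow> 'a::ab_group_add \<Rightarrow> 'a"
  assumes leib: "leibniz_algebra s br" and char: "(2::'k) \<noteq> 0"
    and anti: "\<And>x y. br x y = - br y x"
  shows "lie_algebra s br"
proof -
  have vs: "vector_space s"
    and bil: "bilinear_map s s s br"
    and leibniz: "\<And>x y z. br x (br y z) = br (br x y) z - br (br x z) y"
    using leib unfolding leibniz_algebra_def by auto
  have alternating: "br x x = 0" for x
    using anti[of x x] vector_space_add_self_eq_zero_imp_zero[OF vs char]
    unfolding eq_neg_iff_add_eq_0 by blast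
  have jacobi: "br x (br y z) + br y (br z x) + br z (br x y) = 0" for x y z
  proof -
    have "br x (br y z) = - br z (br x y) + br y (br x z)"
      using leibniz[of x y z] anti[of "br x y" z] anti[of "br x z" y] by simp
    also have "br y (br x z) = - br y (br z x)"
      using anti[of x z] bilinear_map_minus_right[OF bil] by simp
    finally show ?thesis by (simp add: eq_neg_iff_add_eq_0 algebra_simps)
  qed
  show ?thesis
    using leib alternating jacobi unfolding leibniz_algebra_def lie_algebra_def by blast
qed

lemma antisymmetric_leibniz_action_is_lie_action:
  assumes act: "leibniz_action sM brM sN brN act1 act2"
    and antiM: "\<And>x y. brM x y = - brM y x"
    and act2_eq: "\<And>m n. act2 m n = - act1 n m"
  shows "lie_action sM brM sN brN act1"
proof -
  have bil: "bilinear_map sN sM sM act1"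
    and derivation: "\<And>n m m'. act1 n (brM m m') = brM (act1 n m) m' - brM (act1 n m') m"
    and representation: "\<And>n n' m. act1 n (act1 n' m) = act1 (brN n n') m - act2 (act1 n m) n'"
    using act unfolding leibniz_action_def by auto
  show ?thesis
    unfolding lie_action_def
  proof (intro conjI allI)
    fix n n' m
    show "act1 (brN n n') m = act1 n (act1 n' m) - act1 n' (act1 n m)"
      using representation[of n n' m] act2_eq[of "act1 n m" n'] by (simp add: algebra_simps)
  next
    fix n m m'
    show "act1 n (brM m m') = brM (act1 n m) m' + brM m (act1 n m')"
      using derivation[of n m m'] antiM[of "act1 n m'" m] by simp
  qed (rule bil)
qed

context
  fixes sM :: "'k::field \<Rightarrow> 'm::ab_group_add \<Rightarrow> 'm" and brM :: "'m \<Rightarrow> 'm \<Rightarrow> 'm"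
    and sN :: "'k \<Rightarrow> 'n::ab_group_add \<Rightarrow> 'n" and brN :: "'n \<Rightarrow> 'n \<Rightarrow> 'n"
    and act1 :: "'n \<Rightarrow> 'm \<Rightarrow> 'm" and act2 :: "'m \<Rightarrow> 'n \<Rightarrow> 'm" and d :: "'m \<Rightarrow> 'n"
    and br1 br2 :: "'n \<Rightarrow> 'n \<Rightarrow> 'm"
  assumes braid: "leibniz_braiding sM brM sN brN act1 act2 d br1 br2"
    and sym: "\<And>n n'. br1 n n' = - br2 n' n"
begin

lemma symmetric_braiding_act2_eq_neg_act1: "act2 m n = - act1 n m"
  using braid sym[of "d m" n] unfolding leibniz_braiding_def by metis

lemma symmetric_braiding_bracket_M_antisym: "brM x y = - brM y x"
  using braid sym[of "d x" "d y"] unfolding leibniz_braiding_def by metis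

lemma symmetric_braiding_bracket_N_antisym:
  assumes lin: "Vector_Spaces.linear sM sN d"
  shows "brN x y = - brN y x"
proof -
  have "d (br1 x y) = brN x y" and "d (br2 y x) = brN y x"
    using braid unfolding leibniz_braiding_def by auto
  then show ?thesis
    using sym[of x y] module_hom.neg[OF lin[folded module_hom_iff_linear]] by metis
qed

lemma symmetric_braiding_is_lie_braiding: "lie_braiding sM brM sN brN act1 d br1"
proof -
  have b1: "br1 n (brN n' n'') = br1 (brN n n') n'' - br1 (brN n n'') n'"
    and b3: "br1 n (brN n' n'') = br1 (brN n n') n'' - br2 (brN n n'') n'" for n n' n''
    using braid unfolding leibniz_braiding_def by auto
  \<comment> \<open>\<open>b1\<close> and \<open>b3\<close> give \<open>{[n,n''],n'} = \<langle>[n,n''],n'\<rangle>\<close>, which is \<open>-{n',[n,n'']}\<close> by symmetry.\<close>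
  have "br1 (brN n n') n'' = br1 n (brN n' n'') - br1 n' (brN n n'')" for n n' n''
    using b1[of n n' n''] b3[of n n' n''] sym[of n' "brN n n''"] by simp
  moreover have "br1 (d m) n = - act1 n m" for m n
    using braid symmetric_braiding_act2_eq_neg_act1 unfolding leibniz_braiding_def by metis
  ultimately show ?thesis
    using braid b1 unfolding leibniz_braiding_def lie_braiding_def by blast
qed

lemma symmetric_braiding_is_lie_crossed_module:
  assumes char: "(2::'k) \<noteq> 0" and xm: "leibniz_crossed_module sM brM sN brN act1 act2 d"
  shows "lie_crossed_module sM brM sN brN act1 d"
proof -
  have leibM: "leibniz_algebra sM brM" and leibN: "leibniz_algebra sN brN"
    and act: "leibniz_action sM brM sN brN act1 act2" and hom: "leibniz_hom sM brM sN brN d"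
    using xm unfolding leibniz_crossed_module_def by auto
  have antiN: "brN x y = - brN y x" for x y
    using hom symmetric_braiding_bracket_N_antisym unfolding leibniz_hom_def by blast
  have "lie_algebra sM brM"
    using antisymmetric_leibniz_algebra_is_lie_algebra[OF leibM char]
      symmetric_braiding_bracket_M_antisym .
  moreover have "lie_algebra sN brN"
    using antisymmetric_leibniz_algebra_is_lie_algebra[OF leibN char antiN] .
  moreover have "lie_action sM brM sN brN act1"
    using antisymmetric_leibniz_action_is_lie_action[OF act]
      symmetric_braiding_bracket_M_antisym symmetric_braiding_act2_eq_neg_act1 .
  ultimately show ?thesis
    using xm unfolding leibniz_crossed_module_def lie_crossed_module_def by blast
qed

end

theorem mainTheorem5:
  fixes sM :: "'k::field \<Rightarrow> 'm::ab_group_add \<Rightarrow> 'm" and brM :: "'m \<Rightarrow> 'm \<Rightarrow> 'm"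
    and sN :: "'k \<Rightarrow> 'n::ab_group_add \<Rightarrow> 'n" and brN :: "'n \<Rightarrow> 'n \<Rightarrow> 'n"
    and act1 :: "'n \<Rightarrow> 'm \<Rightarrow> 'm" and act2 :: "'m \<Rightarrow> 'n \<Rightarrow> 'm" and d :: "'m \<Rightarrow> 'n"
    and br1 br2 :: "'n \<Rightarrow> 'n \<Rightarrow> 'm"
  assumes char: "(2::'k) \<noteq> 0"
    and xm: "leibniz_crossed_module sM brM sN brN act1 act2 d"
    and braid: "leibniz_braiding sM brM sN brN act1 act2 d br1 br2"
    and sym: "\<forall>n n'. br1 n n' = - br2 n' n"
  shows "(\<forall>m n. act2 m n = - act1 n m) \<and>
         lie_crossed_module sM brM sN brN act1 d \<and>
         lie_braiding sM brM sN brN act1 d br1"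
  using symmetric_braiding_act2_eq_neg_act1[OF braid]
    symmetric_braiding_is_lie_crossed_module[OF braid _ char xm]
    symmetric_braiding_is_lie_braiding[OF braid] sym
  by blast

end
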